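(* Let $T_\mathrm{i}>T_\mathrm{o}^{\mathrm{OA}}>0$, $U_\mathrm{i}>0$, $U_\mathrm{o}>0$, $\Omega_\mathrm{c}\ge 0$, $\Omega_\mathrm{h}\ge 0$ and $\varepsilon\in[0,1]$. For $\eta\in[0,1]$ set $\overline{T}_\mathrm{h}(\eta)=\frac{\eta T_\mathrm{i}}{U_\mathrm{i}}$ and $\overline{T}_\mathrm{c}(\eta)=\frac{(1-\eta)T_\mathrm{o}^{\mathrm{OA}}}{U_\mathrm{o}}$, and consider the problem $$\max_{0\le\eta\le1}\ \eta T_\mathrm{i}+(1-\eta)T_\mathrm{o}^{\mathrm{OA}}\quad\text{subject to}\quad \overline{T}_\mathrm{c}(\eta)\ge\Omega_\mathrm{c},\ \ \overline{T}_\mathrm{h}(\eta)\ge\Omega_\mathrm{h},\ \ \overline{T}_\mathrm{c}(\eta)\ge\varepsilon\,\overline{T}_\mathrm{h}(\eta).$$ Let $$\eta^\ast=\min\left(1-\frac{\Omega_\mathrm{c}U_\mathrm{o}}{T_\mathrm{o}^{\mathrm{OA}}},\ \left(1+\varepsilon\frac{U_\mathrm{o}T_\mathrm{i}}{U_\mathrm{i}T_\mathrm{o}^{\mathrm{OA}}}\right)^{-1}\right).$$ If $\eta^\ast\ge\frac{\Omega_\mathrm{h}U_\mathrm{i}}{T_\mathrm{i}}$, then $\eta^\ast$ is feasible and is an optimal solution of the problem.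
   Context: Interpretation: in shared access a femtocell access point allocates a fraction $\eta$ of its time slots to its $U_\mathrm{i}$ home users (zone throughput $T_\mathrm{i}$) and $1-\eta$ to $U_\mathrm{o}$ neighboring cellular users (zone throughput $T_\mathrm{o}^{\mathrm{OA}}$); $\Omega_\mathrm{c},\Omega_\mathrm{h}$ are minimum per-user throughputs and $\varepsilon$ a fairness parameter. *)

theory Defs
  imports Complex_Main
begin

definition Th_bar :: "real \<Rightarrow> real \<Rightarrow> real \<Rightarrow> real" where
  "Th_bar Ti Ui \<eta> = \<eta> * Ti / Ui"

definition Tc_bar :: "real \<Rightarrow> real \<Rightarrow> real \<Rightarrow> real" where
  "Tc_bar To Uo \<eta> = (1 - \<eta>) * To / Uo"

definition objective :: "real \<Rightarrow> real \<Rightarrow> real \<Rightarrow> real" where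
  "objective Ti To \<eta> = \<eta> * Ti + (1 - \<eta>) * To"

definition feasible ::
  "real \<Rightarrow> real \<Rightarrow> real \<Rightarrow> real \<Rightarrow> real \<Rightarrow> real \<Rightarrow> real \<Rightarrow> real \<Rightarrow> bool" where
  "feasible Ti To Ui Uo \<Omega>c \<Omega>h \<epsilon> \<eta> \<longleftrightarrow>
     0 \<le> \<eta> \<and> \<eta> \<le> 1 \<and>
     Tc_bar To Uo \<eta> \<ge> \<Omega>c \<and>
     Th_bar Ti Ui \<eta> \<ge> \<Omega>h \<and>
     Tc_bar To Uo \<eta> \<ge> \<epsilon> * Th_bar Ti Ui \<eta>"

end

theory Submission
  imports Defs
begin

text \<open>Each constraint confines \<open>\<eta>\<close> to a half-line: the minimum cellular throughput and
  the fairness constraint bound it from above, the minimum home throughput from below, so the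
  feasible set is an interval with right endpoint \<open>\<eta>s\<close>. Since \<open>Ti > To\<close> the objective is
  increasing in \<open>\<eta>\<close>, hence maximal at that endpoint.\<close>

lemma Tc_bar_ge_iff:
  assumes "To > 0" and "Uo > 0"
  shows "Tc_bar To Uo \<eta> \<ge> \<Omega>c \<longleftrightarrow> \<eta> \<le> 1 - \<Omega>c * Uo / To"
  using assms unfolding Tc_bar_def by (simp add: field_simps)

lemma Th_bar_ge_iff:
  assumes "Ti > 0" and "Ui > 0"
  shows "Th_bar Ti Ui \<eta> \<ge> \<Omega>h \<longleftrightarrow> \<eta> \<ge> \<Omega>h * Ui / Ti"
  using assms unfolding Th_bar_def by (simp add: field_simps)

lemma fairness_iff:
  assumes "To > 0" and "Uo > 0" and "Ui > 0" and "Ti \<ge> 0" and "\<epsilon> \<ge> 0"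
  shows "Tc_bar To Uo \<eta> \<ge> \<epsilon> * Th_bar Ti Ui \<eta> \<longleftrightarrow>
         \<eta> \<le> inverse (1 + \<epsilon> * (Uo * Ti) / (Ui * To))"
proof -
  define k where "k = \<epsilon> * (Uo * Ti) / (Ui * To)"
  have "k \<ge> 0" using assms unfolding k_def by simp
  have "Tc_bar To Uo \<eta> \<ge> \<epsilon> * Th_bar Ti Ui \<eta> \<longleftrightarrow> \<epsilon> * \<eta> * Ti * Uo \<le> (1 - \<eta>) * To * Ui"
    using assms unfolding Tc_bar_def Th_bar_def by (simp add: field_simps)
  also have "\<dots> \<longleftrightarrow> \<eta> * (1 + k) \<le> 1"
    using assms unfolding k_def by (simp add: field_simps)
  also have "\<dots> \<longleftrightarrow> \<eta> \<le> inverse (1 + k)"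
    using \<open>k \<ge> 0\<close> by (simp add: inverse_eq_divide pos_le_divide_eq)
  finally show ?thesis unfolding k_def .
qed

lemma objective_mono:
  assumes "To \<le> Ti" and "\<eta> \<le> \<eta>'"
  shows "objective Ti To \<eta> \<le> objective Ti To \<eta>'"
proof -
  have "\<eta> * (Ti - To) \<le> \<eta>' * (Ti - To)" using assms by (intro mult_right_mono) auto
  then show ?thesis unfolding objective_def by (simp add: algebra_simps)
qed

theorem proposition1:
  fixes Ti To Ui Uo \<Omega>c \<Omega>h \<epsilon> \<eta>s :: real
  assumes "Ti > To" and "To > 0" and "Ui > 0" and "Uo > 0"
    and "\<Omega>c \<ge> 0" and "\<Omega>h \<ge> 0" and "0 \<le> \<epsilon>" and "\<epsilon> \<le> 1"
    and "\<eta>s = min (1 - \<Omega>c * Uo / To) (inverse (1 + \<epsilon> * (Uo * Ti) / (Ui * To)))"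
    and "\<eta>s \<ge> \<Omega>h * Ui / Ti"
  shows "feasible Ti To Ui Uo \<Omega>c \<Omega>h \<epsilon> \<eta>s \<and>
         (\<forall>\<eta>. feasible Ti To Ui Uo \<Omega>c \<Omega>h \<epsilon> \<eta> \<longrightarrow> objective Ti To \<eta> \<le> objective Ti To \<eta>s)"
proof -
  have "Ti > 0" using assms by linarith
  have constraints_iff:
    "feasible Ti To Ui Uo \<Omega>c \<Omega>h \<epsilon> \<eta> \<longleftrightarrow> 0 \<le> \<eta> \<and> \<eta> \<le> 1 \<and> \<Omega>h * Ui / Ti \<le> \<eta> \<and> \<eta> \<le> \<eta>s" for \<eta>
    using Tc_bar_ge_iff [where \<eta> = \<eta> and \<Omega>c = \<Omega>c] Th_bar_ge_iff [where \<eta> = \<eta> and \<Omega>h = \<Omega>h]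
      fairness_iff [where \<eta> = \<eta> and \<epsilon> = \<epsilon> and Ti = Ti] assms \<open>Ti > 0\<close>
    unfolding feasible_def by auto
  have "0 \<le> \<Omega>h * Ui / Ti" using assms \<open>Ti > 0\<close> by simp
  moreover have "inverse (1 + \<epsilon> * (Uo * Ti) / (Ui * To)) \<le> 1"
    using assms \<open>Ti > 0\<close> by (simp add: inverse_le_1_iff)
  ultimately have "0 \<le> \<eta>s" "\<eta>s \<le> 1" using assms(9,10) by linarith+
  then have "feasible Ti To Ui Uo \<Omega>c \<Omega>h \<epsilon> \<eta>s"
    using assms(10) by (simp add: constraints_iff)
  moreover have "objective Ti To \<eta> \<le> objective Ti To \<eta>s" if "feasible Ti To Ui Uo \<Omega>c \<Omega>h \<epsilon> \<eta>" for \<eta>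
    using that assms(1) by (intro objective_mono) (simp_all add: constraints_iff)
  ultimately show ?thesis by blast
qed

end
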